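(* For games with cost function $c(x)=x^2$, the worst-case price of anarchy is strictly larger than $2$; that is, there exists such a game, a Nash equilibrium $s$ and an assignment $s^*$ of it with $C(s)/C(s^* )>2$.
   Context: A game is specified by a cost function $c$ (here $c(x)=x^2$), a time horizon $T$ with slots $t=1,\dots,T$, and a set of jobs, each job $j$ having integer release time $r_j$ and integer deadline $d_j$ with $0<r_j<d_j<T$. An assignment $s$ gives each job $j$ a slot $s_j$ with $r_j\le s_j<d_j$. The load of slot $t$ is $l_t(s)=|\{j:s_j=t\}|$ and $C(s)=\sum_{t=1}^T c(l_t(s))$. An assignment $s$ is a Nash equilibrium if for every job $j$ and every slot $t\neq s_j$ with $r_j\le t<d_j$: $\frac{c(l_{s_j}(s))}{l_{s_j}(s)}\le\frac{c(l_t(s)+1)}{l_t(s)+1}$. The price of anarchy of a game is $\max_{s\text{ a NE}}C(s)/\min_{s^*}C(s^* )$. *)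

theory Defs
  imports Main Complex_Main
begin

text \<open>A game: a horizon T (slots 1..T) and a list of jobs, job j = (r_j, d_j).
  Assignments are functions from job indices (j < length jobs) to slots.\<close>

definition valid_game :: "nat \<Rightarrow> (nat \<times> nat) list \<Rightarrow> bool" where
  "valid_game T jobs \<longleftrightarrow>
     (\<forall>j < length jobs. 0 < fst (jobs ! j) \<and> fst (jobs ! j) < snd (jobs ! j) \<and> snd (jobs ! j) < T)"

definition is_assignment :: "(nat \<times> nat) list \<Rightarrow> (nat \<Rightarrow> nat) \<Rightarrow> bool" where
  "is_assignment jobs s \<longleftrightarrow>
     (\<forall>j < length jobs. fst (jobs ! j) \<le> s j \<and> s j < snd (jobs ! j))"

definition load :: "(nat \<times> nat) list \<Rightarrow> (nat \<Rightarrow> nat) \<Rightarrow> nat \<Rightarrow> nat" where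
  "load jobs s t = card {j. j < length jobs \<and> s j = t}"

definition total_cost :: "(nat \<Rightarrow> real) \<Rightarrow> nat \<Rightarrow> (nat \<times> nat) list \<Rightarrow> (nat \<Rightarrow> nat) \<Rightarrow> real" where
  "total_cost c T jobs s = (\<Sum>t = 1..T. c (load jobs s t))"

definition is_nash :: "(nat \<Rightarrow> real) \<Rightarrow> (nat \<times> nat) list \<Rightarrow> (nat \<Rightarrow> nat) \<Rightarrow> bool" where
  "is_nash c jobs s \<longleftrightarrow> is_assignment jobs s \<and>
     (\<forall>j < length jobs. \<forall>t. t \<noteq> s j \<and> fst (jobs ! j) \<le> t \<and> t < snd (jobs ! j) \<longrightarrow>
        c (load jobs s (s j)) / real (load jobs s (s j))
          \<le> c (load jobs s t + 1) / real (load jobs s t + 1))"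

definition sq_cost :: "nat \<Rightarrow> real" where
  "sq_cost x = (real x) ^ 2"

end

theory Submission
  imports Defs
begin

(* Since c(l)/l = l for c(l) = l^2, a job sitting on a slot of load k is content as long as
   every slot in its window carries load at least k - 1.  The equilibrium uses loads
   6, 5, 4, 3, 2, 1 on consecutive blocks of 1, 2, 5, 19, 57, 114 slots starting at slot 1,
   and a job on a slot of load k gets the window [1, e_k) where e_k - 1 is the last slot
   of load k - 1 (and e_1 = 313).  These 321 jobs cost 679 in equilibrium, but matched in
   order of deadline they fit into slots 1..312 with load at most 2 (slots 1..9 doubled),
   at cost 339 < 679 / 2. *)

lemma sq_cost_div_self [simp]: "sq_cost n / real n = real n"
  by (cases "n = 0") (simp_all add: sq_cost_def power2_eq_square)

lemma is_nash_sq_cost_iff: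
  "is_nash sq_cost jobs s \<longleftrightarrow> is_assignment jobs s \<and>
     (\<forall>j < length jobs. \<forall>t. t \<noteq> s j \<and> fst (jobs ! j) \<le> t \<and> t < snd (jobs ! j) \<longrightarrow>
        load jobs s (s j) \<le> load jobs s t + 1)"
  unfolding is_nash_def sq_cost_div_self of_nat_le_iff ..

definition slots_of_loads :: "(nat \<Rightarrow> nat) \<Rightarrow> nat list \<Rightarrow> nat list" where
  "slots_of_loads L ts = concat (map (\<lambda>t. replicate (L t) t) ts)"

lemma count_list_slots_of_loads:
  "distinct ts \<Longrightarrow> count_list (slots_of_loads L ts) t = (if t \<in> set ts then L t else 0)"
  unfolding slots_of_loads_def
  by (induction ts) (auto simp: count_list_eq_length_filter filter_replicate)

lemma set_slots_of_loads: "set (slots_of_loads L ts) = {t \<in> set ts. 0 < L t}"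
  unfolding slots_of_loads_def by auto

lemma load_nth: "length jobs = length xs \<Longrightarrow> load jobs ((!) xs) t = count_list xs t"
  unfolding load_def by (simp add: count_list_eq_length_filter length_filter_conv_card eq_commute)

lemma is_assignment_nth_iff:
  "length jobs = length xs \<Longrightarrow>
     is_assignment jobs ((!) xs) \<longleftrightarrow> list_all2 (\<lambda>w x. fst w \<le> x \<and> x < snd w) jobs xs"
  unfolding is_assignment_def by (auto simp: list_all2_conv_all_nth)

lemma total_cost_slots_of_loads:
  assumes "distinct ts" "set ts = {1..T}" "length jobs = length (slots_of_loads L ts)"
  shows "total_cost c T jobs ((!) (slots_of_loads L ts)) = (\<Sum>t = 1..T. c (L t))"
  unfolding total_cost_def using assms
  by (intro sum.cong) (auto simp: load_nth count_list_slots_of_loads)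

definition eq_load :: "nat \<Rightarrow> nat" where
  "eq_load t = (if t = 0 then 0 else if t \<le> 1 then 6 else if t \<le> 3 then 5 else if t \<le> 8 then 4
     else if t \<le> 27 then 3 else if t \<le> 84 then 2 else if t \<le> 198 then 1 else 0)"

definition opt_load :: "nat \<Rightarrow> nat" where
  "opt_load t = (if t = 0 then 0 else if t \<le> 9 then 2 else if t \<le> 312 then 1 else 0)"

definition deadline_of_load :: "nat \<Rightarrow> nat" where
  "deadline_of_load k = (if k = 6 then 4 else if k = 5 then 9 else if k = 4 then 28
     else if k = 3 then 85 else if k = 2 then 199 else 313)"

definition eq_slots :: "nat list" where
  "eq_slots = slots_of_loads eq_load [1..<315]"

definition opt_slots :: "nat list" where
  "opt_slots = slots_of_loads opt_load [1..<315]"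

definition poa_jobs :: "(nat \<times> nat) list" where
  "poa_jobs = map (\<lambda>t. (1, deadline_of_load (eq_load t))) eq_slots"

lemma eq_load_antimono: "1 \<le> t \<Longrightarrow> t \<le> t' \<Longrightarrow> eq_load t' \<le> eq_load t"
  unfolding eq_load_def by auto

lemma eq_load_le_6: "eq_load t \<le> 6"
  unfolding eq_load_def by auto

lemma eq_load_before_deadline:
  "0 < k \<Longrightarrow> k \<le> 6 \<Longrightarrow> eq_load (deadline_of_load k - 1) + 1 = k"
proof -
  assume "0 < k" "k \<le> 6"
  then have "k \<in> {1, 2, 3, 4, 5, 6}" by auto
  then show ?thesis by (auto simp: eq_load_def deadline_of_load_def)
qed

lemma eq_load_nash:
  assumes "0 < eq_load t" "1 \<le> t'" "t' < deadline_of_load (eq_load t)"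
  shows "eq_load t \<le> eq_load t' + 1"
proof -
  have "eq_load (deadline_of_load (eq_load t) - 1) \<le> eq_load t'"
    using assms(2,3) by (intro eq_load_antimono) auto
  then show ?thesis
    using eq_load_before_deadline[OF assms(1) eq_load_le_6] by linarith
qed

lemma eq_load_in_window: "0 < eq_load t \<Longrightarrow> 1 \<le> t \<and> t < deadline_of_load (eq_load t)"
  unfolding eq_load_def deadline_of_load_def by (simp split: if_splits)

lemma deadline_of_load_bounds: "1 < deadline_of_load k \<and> deadline_of_load k < 314"
  unfolding deadline_of_load_def by auto

lemma length_poa_jobs: "length poa_jobs = length eq_slots"
  by (simp add: poa_jobs_def)

lemma length_opt_slots: "length opt_slots = length eq_slots"
  by code_simp

(* The i-th job in order of slot, hence of deadline, takes the i-th slot of the spread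
   assignment. *)
lemma opt_slots_in_windows:
  "list_all2 (\<lambda>t t'. 1 \<le> t' \<and> t' < deadline_of_load (eq_load t)) eq_slots opt_slots"
  by code_simp

lemma sum_eq_load_squares: "(\<Sum>t = 1..314. sq_cost (eq_load t)) = 679"
  by code_simp

lemma sum_opt_load_squares: "(\<Sum>t = 1..314. sq_cost (opt_load t)) = 339"
  by code_simp

lemma load_eq_slots: "load poa_jobs ((!) eq_slots) t = eq_load t"
proof -
  have "eq_load t = 0" if "t \<notin> set [1..<315]"
    using that by (auto simp: eq_load_def)
  then show ?thesis
    by (simp add: load_nth length_poa_jobs eq_slots_def count_list_slots_of_loads del: upt_Suc)
qed

lemma eq_load_pos: "t \<in> set eq_slots \<Longrightarrow> 0 < eq_load t"
  by (simp add: eq_slots_def set_slots_of_loads)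

lemma valid_game_poa_jobs: "valid_game 314 poa_jobs"
  unfolding valid_game_def poa_jobs_def using deadline_of_load_bounds by simp

lemma is_nash_eq_slots: "is_nash sq_cost poa_jobs ((!) eq_slots)"
  unfolding is_nash_sq_cost_iff
proof (intro conjI allI impI)
  have "1 \<le> t \<and> t < deadline_of_load (eq_load t)" if "t \<in> set eq_slots" for t
    using that by (intro eq_load_in_window eq_load_pos)
  then show "is_assignment poa_jobs ((!) eq_slots)"
    by (simp add: is_assignment_nth_iff length_poa_jobs poa_jobs_def list_all2_map1
        list_all2_same)
next
  fix j t
  assume "j < length poa_jobs"
    and "t \<noteq> eq_slots ! j \<and> fst (poa_jobs ! j) \<le> t \<and> t < snd (poa_jobs ! j)"
  then have "0 < eq_load (eq_slots ! j)" "1 \<le> t" "t < deadline_of_load (eq_load (eq_slots ! j))"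
    by (auto simp: length_poa_jobs poa_jobs_def intro: eq_load_pos)
  then show "load poa_jobs ((!) eq_slots) (eq_slots ! j) \<le> load poa_jobs ((!) eq_slots) t + 1"
    unfolding load_eq_slots by (rule eq_load_nash)
qed

lemma is_assignment_opt_slots: "is_assignment poa_jobs ((!) opt_slots)"
  using opt_slots_in_windows
  by (simp add: is_assignment_nth_iff length_poa_jobs length_opt_slots poa_jobs_def list_all2_map1)

lemma set_upt_horizon: "set [1..<315] = {1..314::nat}"
  by auto

lemma total_cost_eq_slots: "total_cost sq_cost 314 poa_jobs ((!) eq_slots) = 679"
  using total_cost_slots_of_loads[OF distinct_upt set_upt_horizon, of poa_jobs eq_load sq_cost]
  unfolding eq_slots_def[symmetric] length_poa_jobs sum_eq_load_squares by simp

lemma total_cost_opt_slots: "total_cost sq_cost 314 poa_jobs ((!) opt_slots) = 339"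
  using total_cost_slots_of_loads[OF distinct_upt set_upt_horizon, of poa_jobs opt_load sq_cost]
  unfolding opt_slots_def[symmetric] length_poa_jobs length_opt_slots sum_opt_load_squares by simp

theorem lemma3:
  shows "\<exists>T jobs s s'. valid_game T jobs \<and> is_nash sq_cost jobs s \<and> is_assignment jobs s' \<and>
           total_cost sq_cost T jobs s / total_cost sq_cost T jobs s' > 2"
proof (intro exI conjI)
  show "valid_game 314 poa_jobs" by (rule valid_game_poa_jobs)
  show "is_nash sq_cost poa_jobs ((!) eq_slots)" by (rule is_nash_eq_slots)
  show "is_assignment poa_jobs ((!) opt_slots)" by (rule is_assignment_opt_slots)
  show "total_cost sq_cost 314 poa_jobs ((!) eq_slots) /
      total_cost sq_cost 314 poa_jobs ((!) opt_slots) > 2"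
    unfolding total_cost_eq_slots total_cost_opt_slots by simp
qed

end
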